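(* Assume $r>\mu$. (a) If $C-rK_O\le0$ and $C+rK_I>0$, and $p_I:=e^{-\mu\delta}\frac{\lambda_2}{\lambda_2-1}(r-\mu)\left(\frac{C}{r}+K_I\right)$, then $p_I>e^{-\mu\delta}(C+rK_I)$. (b) If $C-rK_O>0$, $C+rK_I>0$, $K_I+K_O\ge0$, and $p_I$ is the largest solution of $A(\lambda_2-\lambda_1)p^{\lambda_1}+\frac{e^{(\mu-r)\delta}}{r-\mu}(\lambda_2-1)p-\lambda_2e^{-r\delta}\left(\frac{C}{r}+K_I\right)=0$, then $p_I>e^{-\mu\delta}(C+rK_I)$. (c) If $C-rK_O>0$, $C+rK_I>0$, $K_I+K_O<0$ and $p_O<e^{-\mu\delta}(C+rK_I)$, and $p_I^{(1)}<p_I^{(2)}$ are the entry thresholds for which $\tau_I^*:=\inf\{t>0:P(t)\le p_I^{(1)}\text{ or }P(t)\ge p_I^{(2)}\}$ maximizes the problem defining $H$ (equivalently, $(p_I^{(1)},p_I^{(2)})$ is the solution with $p_I^{(1)}<p_I^{(2)}$ of the smooth-fit system: there are constants $B_1,B_2$ with $B_1x^{\lambda_1}+B_2x^{\lambda_2}=-e^{-r\delta}(K_I+K_O)$ and $\lambda_1B_1x^{\lambda_1-1}+\lambda_2B_2x^{\lambda_2-1}=0$ at $x=p_I^{(1)}$, and $B_1y^{\lambda_1}+B_2y^{\lambda_2}=Ay^{\lambda_1}+\frac{e^{(\mu-r)\delta}}{r-\mu}y-e^{-r\delta}(\frac{C}{r}+K_I)$ and $\lambda_1B_1y^{\lambda_1-1}+\lambda_2B_2y^{\lambda_2-1}=\lambda_1Ay^{\lambda_1-1}+\frac{e^{(\mu-r)\delta}}{r-\mu}$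 at $y=p_I^{(2)}$, with $p_I^{(1)}\le p_O$), then $p_I^{(1)}<e^{-\mu\delta}(C-rK_O)$ and $p_I^{(2)}>e^{-\mu\delta}(C+rK_I)$.
   Context: Price $P$: $\mathrm{d}P=\mu P\,\mathrm{d}t+\sigma P\,\mathrm{d}B$, $P(0)=p>0$, with $B$ a standard Brownian motion, $\mu\in\mathbb{R}$, $\sigma>0$; $\mathbb{E}^p$ is expectation given $P(0)=p$; stopping times valued in $[0,+\infty]$ with $e^{-r\tau}(\cdots)=0$ on $\{\tau=\infty\}$. Constants $r>0$, $C,K_I,K_O\in\mathbb{R}$, $\delta\ge0$. $\lambda_1<\lambda_2$ are the roots of $r-\mu\lambda-\frac12\sigma^2\lambda(\lambda-1)=0$. $k_1:=\frac{e^{(\mu-r)\delta}-1}{\mu-r}$, $k_0:=\frac{C}{r}(e^{-r\delta}-1)+e^{-r\delta}K_I$, $l_1:=-k_1$, $l_0:=-\frac{C}{r}(e^{-r\delta}-1)+e^{-r\delta}K_O$. $G(p):=\sup_{\tau_O}\mathbb{E}^p[\int_0^{\tau_O}e^{-rt}(P(t)-C)\mathrm{d}t-e^{-r\tau_O}(l_1P(\tau_O)+l_0)]$ and $H(p):=\sup_{\tau_I}\mathbb{E}^p[e^{-r\tau_I}(G(P(\tau_I))-k_1P(\tau_I)-k_0)]$. When $C>rK_O$: $p_O:=e^{-\mu\delta}\frac{\lambda_1}{\lambda_1-1}(r-\mu)(\frac{C}{r}-K_O)$, $A:=e^{(\mu-r)\delta}p_O^{1-\lambda_1}/(\lambda_1(\mu-r))$.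 *)

theory Defs
  imports "HOL-Analysis.Analysis"
begin

definition pO :: "real \<Rightarrow> real \<Rightarrow> real \<Rightarrow> real \<Rightarrow> real \<Rightarrow> real \<Rightarrow> real" where
  "pO mu r C KO delta l1 =
     exp (- mu * delta) * (l1 / (l1 - 1)) * (r - mu) * (C / r - KO)"

definition Acoef :: "real \<Rightarrow> real \<Rightarrow> real \<Rightarrow> real \<Rightarrow> real \<Rightarrow> real \<Rightarrow> real" where
  "Acoef mu r C KO delta l1 =
     exp ((mu - r) * delta) * (pO mu r C KO delta l1) powr (1 - l1) / (l1 * (mu - r))"

end

theory Submission
  imports Defs
begin

text \<open>
  Write c = exp((mu - r) delta) / (r - mu) and E = exp(-r delta). Vieta's formulas for the
  roots l1 < 0 < 1 < l2 give
  (1 - l1)(l2 - 1) c exp(-mu delta) r x = -l1 l2 E x, and (1 - l1) c p_O = -l1 E (C/r - K_O),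
  so all thresholds become explicit multiples of each other; part (a) reduces to
  l2/(l2 - 1) (r - mu) > r. In (b) the defining function is negative at the break-even level
  exp(-mu delta)(C + r K_I), by the strict Bernoulli inequality x^e > 1 + e(x - 1) for e outside
  [0, 1], and grows linearly, so it has a root beyond that level. In (c) the first bound follows
  from p_I1 <= p_O. For the second, if p_I2 were at most the break-even level, smooth fit at p_I2
  would put B1 x^l1 + B2 x^l2 strictly below the entry payoff at every x up to that level other
  than p_I2; but smooth fit at p_I1 puts it at or above the payoff at p_O, strictly unless
  p_O = p_I1.
\<close>

lemma powr_gt_tangent:
  fixes x e :: real
  assumes x: "0 < x" "x \<noteq> 1" and e: "e > 1 \<or> e < 0"
  shows "x powr e > 1 + e * (x - 1)"
proof -
  define f where "f t = t powr e - e * t" for t :: real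
  have deriv: "DERIV f t :> e * (t powr (e - 1) - 1)" if "t > 0" for t
    unfolding f_def using that by (auto intro!: derivative_eq_intros simp: algebra_simps)
  have slope_sign: "(t - 1) * (e * (t powr (e - 1) - 1)) > 0" if "t > 0" "t \<noteq> 1" for t
    using powr_less_mono2[of "e - 1" t 1] powr_less_mono2[of "e - 1" 1 t]
      powr_less_mono2_neg[of "e - 1" t 1] powr_less_mono2_neg[of "e - 1" 1 t] that e
    by (cases "t < 1") (auto simp: zero_less_mult_iff mult_less_0_iff)
  have cont: "continuous_on {a..b} f" if "0 < a" for a b
    unfolding f_def using that by (intro continuous_intros) auto
  have "f 1 < f x"
  proof (cases "x > 1")
    case True
    show ?thesis
    proof (rule DERIV_pos_imp_increasing_open[OF True _ cont])
      fix t assume "1 < t" "t < x"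
      then have "e * (t powr (e - 1) - 1) > 0"
        using slope_sign[of t] by (simp add: zero_less_mult_iff)
      then show "\<exists>y. DERIV f t :> y \<and> y > 0"
        using deriv[of t] \<open>1 < t\<close> by auto
    qed simp
  next
    case False
    then have "x < 1" using x by simp
    show ?thesis
    proof (rule DERIV_neg_imp_decreasing_open[OF \<open>x < 1\<close> _ cont])
      fix t assume "x < t" "t < 1"
      then have "e * (t powr (e - 1) - 1) < 0"
        using slope_sign[of t] x by (simp add: zero_less_mult_iff)
      then show "\<exists>y. DERIV f t :> y \<and> y < 0"
        using deriv[of t] x \<open>x < t\<close> by auto
    qed (use x in simp)
  qed
  then show ?thesis unfolding f_def by (simp add: algebra_simps)
qed

lemma characteristic_roots:
  fixes mu sigma r l1 l2 :: real
  assumes sigma: "sigma > 0" and r: "r > 0" "r > mu"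
    and roots: "r - mu * l1 - sigma^2 / 2 * l1 * (l1 - 1) = 0"
               "r - mu * l2 - sigma^2 / 2 * l2 * (l2 - 1) = 0"
    and l12: "l1 < l2"
  shows "l1 < 0" "l2 > 1" "r * ((1 - l1) * (l2 - 1)) = - l1 * l2 * (r - mu)"
proof -
  define s where "s = sigma^2 / 2"
  have s: "s > 0" using sigma by (simp add: s_def)
  have root_s: "r - mu * l1 - s * l1 * (l1 - 1) = 0" "r - mu * l2 - s * l2 * (l2 - 1) = 0"
    using roots by (simp_all add: s_def)
  have "(l1 - l2) * (mu + s * (l1 + l2 - 1))
      = (r - mu * l2 - s * l2 * (l2 - 1)) - (r - mu * l1 - s * l1 * (l1 - 1))"
    by (simp add: algebra_simps)
  then have "(l1 - l2) * (mu + s * (l1 + l2 - 1)) = 0" using root_s by simp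
  then have "mu + s * (l1 + l2 - 1) = 0" using l12 by simp
  then have mu: "mu = s * (1 - l1 - l2)" by (simp add: algebra_simps)
  have "r = mu * l1 + s * l1 * (l1 - 1)" using root_s(1) by simp
  then have r_eq: "r = - s * l1 * l2" unfolding mu by (simp add: algebra_simps)
  have r_mu: "r - mu = s * ((1 - l1) * (l2 - 1))" using mu r_eq by (simp add: algebra_simps)
  have "s * (l1 * l2) < 0" using r r_eq by simp
  then show l1: "l1 < 0" using s l12 by (auto simp: mult_less_0_iff)
  have "s * ((1 - l1) * (l2 - 1)) > 0" using r r_mu by simp
  then show "l2 > 1" using s l1 by (auto simp: zero_less_mult_iff)
  have "- l1 * l2 * (r - mu) = (- s * l1 * l2) * ((1 - l1) * (l2 - 1))"
    unfolding r_mu by (simp add: algebra_simps)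
  then show "r * ((1 - l1) * (l2 - 1)) = - l1 * l2 * (r - mu)"
    unfolding r_eq[symmetric] by simp
qed

lemma discounted_level_scale:
  fixes mu r delta l1 l2 x :: real
  assumes key: "r * ((1 - l1) * (l2 - 1)) = - l1 * l2 * (r - mu)" and rmu: "r > mu"
  shows "(1 - l1) * (l2 - 1) * (exp ((mu - r) * delta) / (r - mu)) * (exp (- mu * delta) * (r * x))
           = - l1 * l2 * exp (- r * delta) * x"
proof -
  have "exp ((mu - r) * delta) * exp (- mu * delta) = exp (- r * delta)"
    by (simp add: exp_add[symmetric] algebra_simps)
  then have "(1 - l1) * (l2 - 1) * (exp ((mu - r) * delta) / (r - mu)) * (exp (- mu * delta) * (r * x))
      = exp (- r * delta) * x * (r * ((1 - l1) * (l2 - 1))) / (r - mu)"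
    by (simp add: field_simps)
  then show ?thesis using rmu by (simp add: key)
qed

lemma pO_scale:
  fixes mu r C KO delta l1 :: real
  assumes l1: "l1 < 0" and rmu: "r > mu"
  shows "(1 - l1) * (exp ((mu - r) * delta) / (r - mu)) * pO mu r C KO delta l1
           = - l1 * exp (- r * delta) * (C / r - KO)"
proof -
  have exps: "exp ((mu - r) * delta) * exp (- mu * delta) = exp (- r * delta)"
    by (simp add: exp_add[symmetric] algebra_simps)
  have "(1 - l1) * (l1 / (l1 - 1)) = - l1" using l1 by (simp add: field_simps)
  moreover have "(1 - l1) * (exp ((mu - r) * delta) / (r - mu)) * pO mu r C KO delta l1
      = (exp ((mu - r) * delta) * exp (- mu * delta)) * ((1 - l1) * (l1 / (l1 - 1))) * (C / r - KO)"
    using rmu by (simp add: pO_def)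
  ultimately show ?thesis unfolding exps by simp
qed

lemma pO_pos:
  fixes mu r C KO delta l1 :: real
  assumes "l1 < 0" "r > mu" "C / r - KO > 0"
  shows "pO mu r C KO delta l1 > 0"
proof -
  have "l1 / (l1 - 1) > 0" using assms(1) by (simp add: divide_neg_neg)
  then show ?thesis unfolding pO_def using assms by (intro mult_pos_pos) auto
qed

lemma Acoef_pO_powr:
  fixes mu r C KO delta l1 :: real
  assumes l1: "l1 < 0" and rmu: "r > mu" and a: "C / r - KO > 0"
  shows "(1 - l1) * Acoef mu r C KO delta l1 * pO mu r C KO delta l1 powr l1
           = exp (- r * delta) * (C / r - KO)"
proof -
  define P where "P = pO mu r C KO delta l1"
  have P: "P > 0" using pO_pos[OF assms] by (simp add: P_def)
  have "Acoef mu r C KO delta l1 * P powr l1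
      = exp ((mu - r) * delta) * (P powr (1 - l1) * P powr l1) / (l1 * (mu - r))"
    by (simp add: Acoef_def P_def)
  also have "P powr (1 - l1) * P powr l1 = P" using P by (simp add: powr_add[symmetric])
  finally have "(1 - l1) * Acoef mu r C KO delta l1 * P powr l1
      = - ((1 - l1) * (exp ((mu - r) * delta) / (r - mu)) * P) / l1"
    using l1 rmu by (simp add: field_simps)
  also have "\<dots> = - (- l1 * exp (- r * delta) * (C / r - KO)) / l1"
    unfolding P_def pO_scale[OF l1 rmu] ..
  also have "\<dots> = exp (- r * delta) * (C / r - KO)"
    using l1 by simp
  finally show ?thesis by (simp add: P_def)
qed

lemma powr_lt_linear:
  fixes l1 l2 t :: real
  assumes l1: "l1 < 0" and l2: "l2 > 1" and t: "t \<ge> l2 / (l2 - 1)"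
  shows "(l2 - l1) * t powr l1 < (l2 - 1) * t"
proof -
  define u where "u = l2 / (l2 - 1)"
  have u: "u > 1" using l2 by (simp add: u_def)
  have "(l2 - l1) / (l2 - 1) = 1 + (1 - l1) * (u - 1)"
    using l2 by (simp add: u_def field_simps)
  also have "\<dots> < u powr (1 - l1)" using u l1 by (intro powr_gt_tangent) auto
  finally have "l2 - l1 < (l2 - 1) * u powr (1 - l1)" using l2 by (simp add: field_simps)
  then have "(l2 - l1) * u powr (l1 - 1) < (l2 - 1) * (u powr (1 - l1) * u powr (l1 - 1))"
    using u by simp
  also have "u powr (1 - l1) * u powr (l1 - 1) = 1" using u by (simp add: powr_add[symmetric])
  finally have u_bound: "(l2 - l1) * u powr (l1 - 1) < l2 - 1" by simp
  have tu: "t \<ge> u" "t > 0" using t u by (simp_all add: u_def)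
  have "(l2 - l1) * t powr l1 = t * ((l2 - l1) * t powr (l1 - 1))"
    using tu by (simp add: powr_diff)
  also have "\<dots> \<le> t * ((l2 - l1) * u powr (l1 - 1))"
    using tu u l1 l2 by (intro mult_left_mono powr_mono2') auto
  also have "\<dots> < t * (l2 - 1)" using u_bound tu by simp
  finally show ?thesis by (simp add: mult.commute)
qed

lemma power_linear_root_beyond:
  fixes A c d e q :: real
  assumes A: "A \<ge> 0" and c: "c > 0" and q: "q > 0" and neg: "A * q powr e + c * q - d < 0"
  obtains p where "p > q" "A * p powr e + c * p - d = 0"
proof -
  define f where "f p = A * p powr e + c * p - d" for p
  define M where "M = d / c + 1"
  have "A * q powr e \<ge> 0" using A by simp
  then have "c * q < d" using neg by linarith
  then have M: "M > q" using c by (simp add: M_def field_simps)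
  have "f M > 0" using A c M q by (simp add: f_def M_def field_simps add_pos_nonneg)
  moreover have "\<forall>x. q \<le> x \<and> x \<le> M \<longrightarrow> isCont f x"
    using q unfolding f_def by (auto intro!: continuous_intros)
  ultimately obtain p where "q \<le> p" "f p = 0"
    using IVT[of f q 0 M] neg M by (auto simp: f_def)
  moreover have "p \<noteq> q" using neg \<open>f p = 0\<close> by (auto simp: f_def)
  ultimately show ?thesis using that[of p] by (simp add: f_def)
qed

lemma root_beyond_breakeven:
  fixes l1 l2 A c E a b P q :: real
  assumes l1: "l1 < 0" and l2: "l2 > 1" and c: "c > 0" and E: "E > 0"
    and a: "0 < a" "a \<le> b" and P: "P > 0"
    and cP: "(1 - l1) * c * P = - l1 * E * a"
    and AP: "(1 - l1) * A * P powr l1 = E * a"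
    and cq: "(1 - l1) * (l2 - 1) * c * q = - l1 * l2 * E * b"
  obtains p where "p > q" "A * (l2 - l1) * p powr l1 + c * (l2 - 1) * p - l2 * E * b = 0"
proof -
  define f where "f p = A * (l2 - l1) * p powr l1 + c * (l2 - 1) * p - l2 * E * b" for p
  define t where "t = q / P"
  have b: "b > 0" using a by simp
  have "- l1 * l2 * E * b > 0" using l1 l2 E b by (intro mult_pos_pos) auto
  then have "(1 - l1) * (l2 - 1) * c * q > 0" using cq by simp
  moreover have "(1 - l1) * (l2 - 1) * c > 0" using l1 l2 c by simp
  ultimately have q: "q > 0" by (simp add: zero_less_mult_iff)
  have q_P: "q = P * t" using P by (simp add: t_def)
  have "(- l1 * E) * ((l2 - 1) * a * t) = (l2 - 1) * t * ((1 - l1) * c * P)"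
    unfolding cP by (simp add: algebra_simps)
  also have "\<dots> = (1 - l1) * (l2 - 1) * c * q" unfolding q_P by (simp add: algebra_simps)
  also have "\<dots> = (- l1 * E) * (l2 * b)" unfolding cq by (simp add: algebra_simps)
  finally have at: "(l2 - 1) * a * t = l2 * b" using l1 E by simp
  have "l2 / (l2 - 1) * 1 \<le> l2 / (l2 - 1) * (b / a)"
    using a l2 by (intro mult_left_mono) auto
  also have "\<dots> = t" using at a l2 by (simp add: field_simps)
  finally have t: "t \<ge> l2 / (l2 - 1)" by simp
  have "(1 - l1) * f q
      = (l2 - l1) * ((1 - l1) * A * P powr l1) * t powr l1 + (1 - l1) * (l2 - 1) * c * q
        - (1 - l1) * l2 * E * b"
    unfolding f_def using P q by (simp add: q_P powr_mult algebra_simps)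
  also have "\<dots> = E * a * ((l2 - l1) * t powr l1 - (l2 - 1) * t)"
    unfolding AP cq using at by (simp add: algebra_simps)
  finally have "(1 - l1) * f q < 0"
    using powr_lt_linear[OF l1 l2 t] E a by (simp add: mult_pos_neg)
  then have "f q < 0" using l1 by (simp add: mult_less_0_iff)
  have "A * ((1 - l1) * P powr l1) > 0" using AP E a by (simp add: mult_ac)
  moreover have "(1 - l1) * P powr l1 > 0" using l1 P by simp
  ultimately have "A > 0" by (simp add: zero_less_mult_iff)
  then show ?thesis
    using power_linear_root_beyond[of "A * (l2 - l1)" "c * (l2 - 1)" q l1 "l2 * E * b"]
      \<open>f q < 0\<close> c l1 l2 q that unfolding f_def by auto
qed

lemma two_power_stationary_min:
  fixes l1 l2 B1 B2 D p y :: real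
  assumes l1: "l1 < 0" and l2: "l2 > 1" and p: "p > 0" and D: "D > 0"
    and level: "B1 * p powr l1 + B2 * p powr l2 = D"
    and slope: "l1 * B1 * p powr (l1 - 1) + l2 * B2 * p powr (l2 - 1) = 0"
    and y: "y > 0" "y \<noteq> p"
  shows "B1 * y powr l1 + B2 * y powr l2 > D"
proof -
  define X Y T where "X = B1 * p powr l1" and "Y = B2 * p powr l2" and "T = y / p"
  have "l1 * X + l2 * Y = (l1 * B1 * p powr (l1 - 1) + l2 * B2 * p powr (l2 - 1)) * p"
    using p by (simp add: X_def Y_def powr_diff field_simps)
  then have weighted: "l1 * X + l2 * Y = 0" using slope by simp
  have sum: "X + Y = D" using level by (simp add: X_def Y_def)
  have "(l2 - l1) * X = l2 * (X + Y) - (l1 * X + l2 * Y)"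
    "(l2 - l1) * Y = (l1 * X + l2 * Y) - l1 * (X + Y)"
    by (simp_all add: algebra_simps)
  then have XY: "(l2 - l1) * X = l2 * D" "(l2 - l1) * Y = - l1 * D"
    unfolding weighted sum by simp_all
  have T: "T > 0" "T \<noteq> 1" using p y by (simp_all add: T_def)
  have "(l2 - l1) * (B1 * y powr l1 + B2 * y powr l2 - D)
      = (l2 - l1) * X * T powr l1 + (l2 - l1) * Y * T powr l2 - (l2 - l1) * D"
    using p y by (simp add: X_def Y_def T_def powr_divide algebra_simps)
  also have "\<dots> = D * (l2 * (T powr l1 - 1) - l1 * (T powr l2 - 1))"
    unfolding XY by (simp add: algebra_simps)
  also have "\<dots> > 0"
  proof -
    have "l2 * (T powr l1 - 1) > l2 * (l1 * (T - 1))"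
      using powr_gt_tangent[OF T, of l1] l1 l2 by simp
    moreover have "- l1 * (T powr l2 - 1) > - l1 * (l2 * (T - 1))"
      using powr_gt_tangent[OF T, of l2] l1 l2 by simp
    ultimately have "l2 * (T powr l1 - 1) - l1 * (T powr l2 - 1) > 0"
      by (simp add: algebra_simps)
    then show ?thesis using D by simp
  qed
  finally show ?thesis using l1 l2 by (simp add: zero_less_mult_iff)
qed

lemma pasted_below_payoff:
  fixes l1 l2 A B1 B2 c E b p q y :: real
  assumes l1: "l1 < 0" and l2: "l2 > 1" and c: "c > 0"
    and q: "(1 - l1) * (l2 - 1) * c * q = - l1 * l2 * E * b"
    and p: "0 < p" "p \<le> q"
    and level: "B1 * p powr l1 + B2 * p powr l2 = A * p powr l1 + c * p - E * b"
    and slope: "l1 * B1 * p powr (l1 - 1) + l2 * B2 * p powr (l2 - 1)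
                  = l1 * A * p powr (l1 - 1) + c"
    and y: "0 < y" "y \<le> q" "y \<noteq> p"
  shows "B1 * y powr l1 + B2 * y powr l2 < A * y powr l1 + c * y - E * b"
proof -
  define \<psi> where "\<psi> z = (B1 - A) + B2 * z powr (l2 - l1) - c * z powr (1 - l1) + E * b * z powr (- l1)"
    for z
  define \<rho> where "\<rho> z = (l2 - l1) * B2 - (1 - l1) * c * z powr (1 - l2) - l1 * E * b * z powr (- l2)"
    for z
  have \<psi>_eq: "\<psi> z = z powr (- l1) * (B1 * z powr l1 + B2 * z powr l2 - (A * z powr l1 + c * z - E * b))"
    if "z > 0" for z
    using that by (simp add: \<psi>_def powr_add[symmetric] powr_mult_base algebra_simps)
  have \<psi>_deriv: "DERIV \<psi> z :> z powr (l2 - l1 - 1) * \<rho> z" if "z > 0" for z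
  proof -
    have "z powr (- l1) = z powr (l2 - l1 - 1) * z powr (1 - l2)"
      "z powr (- l1 - 1) = z powr (l2 - l1 - 1) * z powr (- l2)"
      using that by (simp_all add: powr_add[symmetric])
    then show ?thesis unfolding \<psi>_def \<rho>_def using that
      by (auto intro!: derivative_eq_intros simp: algebra_simps)
  qed
  have \<rho>_deriv: "DERIV \<rho> z :> z powr (- l2 - 1) * ((1 - l1) * (l2 - 1) * c * z + l1 * l2 * E * b)"
    if "z > 0" for z
  proof -
    have "z powr (- l2) = z * z powr (- l2 - 1)" using that by (simp add: powr_diff)
    then show ?thesis unfolding \<rho>_def using that
      by (auto intro!: derivative_eq_intros simp: algebra_simps)
  qed
  have slope_p: "l1 * B1 * p powr l1 + l2 * B2 * p powr l2 = l1 * A * p powr l1 + c * p"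
  proof -
    have "l1 * B1 * p powr l1 + l2 * B2 * p powr l2
        = (l1 * B1 * p powr (l1 - 1) + l2 * B2 * p powr (l2 - 1)) * p"
      "l1 * A * p powr l1 + c * p = (l1 * A * p powr (l1 - 1) + c) * p"
      using p by (simp_all add: powr_diff field_simps)
    then show ?thesis using slope by simp
  qed
  have "(l2 - l1) * B2 * p powr l2 - (1 - l1) * c * p - l1 * E * b
      = (l1 * B1 * p powr l1 + l2 * B2 * p powr l2 - (l1 * A * p powr l1 + c * p))
        - l1 * (B1 * p powr l1 + B2 * p powr l2 - (A * p powr l1 + c * p - E * b))"
    by (simp add: algebra_simps)
  then have "(l2 - l1) * B2 * p powr l2 - (1 - l1) * c * p - l1 * E * b = 0"
    unfolding slope_p level by simp
  moreover have "\<rho> p * p powr l2 = (l2 - l1) * B2 * p powr l2 - (1 - l1) * c * p - l1 * E * b"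
    using p by (simp add: \<rho>_def powr_add[symmetric] algebra_simps)
  ultimately have \<rho>_p: "\<rho> p = 0" using p by simp
  \<comment> \<open>The relation between \<open>q\<close> and \<open>b\<close> says exactly that \<open>\<rho>\<close> is stationary at \<open>q\<close>.\<close>
  have \<rho>_decreasing: "\<rho> z2 < \<rho> z1" if "0 < z1" "z1 < z2" "z2 \<le> q" for z1 z2
  proof (rule DERIV_neg_imp_decreasing_open[OF \<open>z1 < z2\<close>])
    fix z assume z: "z1 < z" "z < z2"
    have "(1 - l1) * (l2 - 1) * c * z < (1 - l1) * (l2 - 1) * c * q"
      using z that l1 l2 c by (intro mult_strict_left_mono) auto
    then have "z powr (- l2 - 1) * ((1 - l1) * (l2 - 1) * c * z + l1 * l2 * E * b) < 0"
      using q z that by (simp add: mult_pos_neg)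
    then show "\<exists>d. DERIV \<rho> z :> d \<and> d < 0" using \<rho>_deriv[of z] z that by auto
  next
    show "continuous_on {z1..z2} \<rho>"
      unfolding \<rho>_def using that by (intro continuous_intros) auto
  qed
  have \<psi>_cont: "continuous_on {z1..z2} \<psi>" if "0 < z1" for z1 z2
    unfolding \<psi>_def using that by (intro continuous_intros) auto
  have "\<psi> y < \<psi> p"
  proof (cases "y < p")
    case True
    show ?thesis
    proof (rule DERIV_pos_imp_increasing_open[OF True _ \<psi>_cont[OF y(1)]])
      fix z assume z: "y < z" "z < p"
      then have "z powr (l2 - l1 - 1) * \<rho> z > 0"
        using \<rho>_decreasing[of z p] \<rho>_p y p by simp
      then show "\<exists>d. DERIV \<psi> z :> d \<and> d > 0" using \<psi>_deriv[of z] z y by auto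
    qed
  next
    case False
    then have "p < y" using y by simp
    show ?thesis
    proof (rule DERIV_neg_imp_decreasing_open[OF \<open>p < y\<close> _ \<psi>_cont[OF p(1)]])
      fix z assume z: "p < z" "z < y"
      then have "z powr (l2 - l1 - 1) * \<rho> z < 0"
        using \<rho>_decreasing[of p z] \<rho>_p y p by (simp add: mult_pos_neg)
      then show "\<exists>d. DERIV \<psi> z :> d \<and> d < 0" using \<psi>_deriv[of z] z p by auto
    qed
  qed
  also have "\<psi> p = 0" using \<psi>_eq[OF p(1)] level by simp
  finally show ?thesis using \<psi>_eq[OF y(1)] y by (simp add: mult_less_0_iff)
qed

lemma entry_beyond_breakeven_without_exit:
  fixes mu r C KI delta l1 l2 :: real
  assumes l1: "l1 < 0" and l2: "l2 > 1"
    and key: "r * ((1 - l1) * (l2 - 1)) = - l1 * l2 * (r - mu)"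
    and rmu: "r > mu" and r: "r > 0" and hI: "C + r * KI > 0"
  shows "exp (- mu * delta) * (l2 / (l2 - 1)) * (r - mu) * (C / r + KI)
           > exp (- mu * delta) * (C + r * KI)"
proof -
  have "l2 * (r - mu) * (1 - l1) - r * ((1 - l1) * (l2 - 1)) = l2 * (r - mu)"
    unfolding key by (simp add: algebra_simps)
  moreover have "l2 * (r - mu) > 0" using l2 rmu by simp
  ultimately have "r * ((1 - l1) * (l2 - 1)) < l2 * (r - mu) * (1 - l1)" by linarith
  also have "\<dots> = (l2 / (l2 - 1) * (r - mu)) * ((1 - l1) * (l2 - 1))" using l2 by simp
  finally have "r < l2 / (l2 - 1) * (r - mu)"
    using l1 l2 by (simp add: mult_less_cancel_right_pos pos_less_divide_eq)
  moreover have "C / r + KI > 0" using hI r by (simp add: field_simps)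
  ultimately have "r * (C / r + KI) < l2 / (l2 - 1) * (r - mu) * (C / r + KI)"
    by (intro mult_strict_right_mono)
  also have "r * (C / r + KI) = C + r * KI" using r by (simp add: field_simps)
  finally have "exp (- mu * delta) * (C + r * KI)
      < exp (- mu * delta) * (l2 / (l2 - 1) * (r - mu) * (C / r + KI))"
    by (intro mult_strict_left_mono) auto
  then show ?thesis by (simp only: mult.assoc)
qed

lemma largest_entry_root_beyond_breakeven:
  fixes mu r C KI KO delta l1 l2 pI :: real
  assumes l1: "l1 < 0" and l2: "l2 > 1"
    and key: "r * ((1 - l1) * (l2 - 1)) = - l1 * l2 * (r - mu)"
    and rmu: "r > mu" and r: "r > 0"
    and hO: "C - r * KO > 0" and hI: "C + r * KI > 0" and hK: "KI + KO \<ge> 0"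
    and largest: "\<forall>p. p > 0 \<and> Acoef mu r C KO delta l1 * (l2 - l1) * p powr l1
           + exp ((mu - r) * delta) / (r - mu) * (l2 - 1) * p
           - l2 * exp (- r * delta) * (C / r + KI) = 0 \<longrightarrow> p \<le> pI"
  shows "pI > exp (- mu * delta) * (C + r * KI)"
proof -
  have a: "C / r - KO > 0" and rb: "r * (C / r + KI) = C + r * KI"
    using hO r by (simp_all add: field_simps)
  obtain p where above: "p > exp (- mu * delta) * (C + r * KI)"
    and root: "Acoef mu r C KO delta l1 * (l2 - l1) * p powr l1
           + exp ((mu - r) * delta) / (r - mu) * (l2 - 1) * p
           - l2 * exp (- r * delta) * (C / r + KI) = 0"
  proof (rule root_beyond_breakeven[OF l1 l2, where A = "Acoef mu r C KO delta l1"
        and c = "exp ((mu - r) * delta) / (r - mu)" and E = "exp (- r * delta)"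
        and a = "C / r - KO" and P = "pO mu r C KO delta l1"])
    show "(1 - l1) * (l2 - 1) * (exp ((mu - r) * delta) / (r - mu)) * (exp (- mu * delta) * (C + r * KI))
        = - l1 * l2 * exp (- r * delta) * (C / r + KI)"
      using discounted_level_scale[OF key rmu, of delta "C / r + KI"] unfolding rb .
  qed (use a hK rmu pO_pos[OF l1 rmu a] pO_scale[OF l1 rmu] Acoef_pO_powr[OF l1 rmu a] in auto)
  have "exp (- mu * delta) * (C + r * KI) > 0" using hI by simp
  then have "p \<le> pI" using largest root above by auto
  then show ?thesis using above by simp
qed

lemma entry_thresholds_straddle_breakeven:
  fixes mu r C KI KO delta l1 l2 p1 p2 B1 B2 :: real
  assumes l1: "l1 < 0" and l2: "l2 > 1"
    and key: "r * ((1 - l1) * (l2 - 1)) = - l1 * l2 * (r - mu)"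
    and rmu: "r > mu" and r: "r > 0"
    and hO: "C - r * KO > 0" and hK: "KI + KO < 0"
    and exit_below: "pO mu r C KO delta l1 < exp (- mu * delta) * (C + r * KI)"
    and p12: "0 < p1" "p1 < p2" "p1 \<le> pO mu r C KO delta l1"
    and level1: "B1 * p1 powr l1 + B2 * p1 powr l2 = - exp (- r * delta) * (KI + KO)"
    and slope1: "l1 * B1 * p1 powr (l1 - 1) + l2 * B2 * p1 powr (l2 - 1) = 0"
    and level2: "B1 * p2 powr l1 + B2 * p2 powr l2
           = Acoef mu r C KO delta l1 * p2 powr l1
             + exp ((mu - r) * delta) / (r - mu) * p2 - exp (- r * delta) * (C / r + KI)"
    and slope2: "l1 * B1 * p2 powr (l1 - 1) + l2 * B2 * p2 powr (l2 - 1)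
           = l1 * Acoef mu r C KO delta l1 * p2 powr (l1 - 1)
             + exp ((mu - r) * delta) / (r - mu)"
  shows "p1 < exp (- mu * delta) * (C - r * KO) \<and> p2 > exp (- mu * delta) * (C + r * KI)"
proof -
  define E c A P where "E = exp (- r * delta)" and "c = exp ((mu - r) * delta) / (r - mu)"
    and "A = Acoef mu r C KO delta l1" and "P = pO mu r C KO delta l1"
  define a b where "a = C / r - KO" and "b = C / r + KI"
  have a: "a > 0" using hO r by (simp add: a_def field_simps)
  have ra: "r * a = C - r * KO" and rb: "r * b = C + r * KI"
    using r by (simp_all add: a_def b_def field_simps)
  have P: "P > 0" using pO_pos[OF l1 rmu] a by (simp add: P_def a_def)
  have c: "c > 0" using rmu by (simp add: c_def)
  have cP: "(1 - l1) * c * P = - l1 * E * a"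
    using pO_scale[OF l1 rmu] by (simp add: c_def P_def E_def a_def)
  have level_scale: "(1 - l1) * (l2 - 1) * c * (exp (- mu * delta) * (r * x)) = - l1 * l2 * E * x" for x
    using discounted_level_scale[OF key rmu] by (simp add: c_def E_def)
  have E: "E > 0" by (simp add: E_def)
  have AP: "(1 - l1) * A * P powr l1 = E * a"
    using Acoef_pO_powr[OF l1 rmu] a by (simp add: A_def P_def E_def a_def)
  have "(1 - l1) * (l2 - 1) * c * P = (l2 - 1) * ((1 - l1) * c * P)" by (simp add: algebra_simps)
  also have "\<dots> = - l1 * l2 * E * a + l1 * E * a" unfolding cP by (simp add: algebra_simps)
  also have "\<dots> < - l1 * l2 * E * a" using l1 E a by (simp add: mult_neg_pos)
  also have "\<dots> = (1 - l1) * (l2 - 1) * c * (exp (- mu * delta) * (r * a))"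
    unfolding level_scale ..
  finally have "P < exp (- mu * delta) * (r * a)"
    using l1 l2 c by (simp add: mult_less_cancel_left_pos)
  then have exit_bound: "p1 < exp (- mu * delta) * (C - r * KO)"
    using p12(3) unfolding ra P_def by simp
  have "p2 > exp (- mu * delta) * (r * b)"
  proof (rule ccontr)
    define q where "q = exp (- mu * delta) * (r * b)"
    assume "\<not> p2 > q"
    then have p2: "0 < p2" "p2 \<le> q" using p12 by simp_all
    define D where "D = - E * (KI + KO)"
    have D: "D > 0" using E hK by (simp add: D_def mult_pos_neg)
    have cq: "(1 - l1) * (l2 - 1) * c * q = - l1 * l2 * E * b"
      unfolding q_def level_scale ..
    have "(1 - l1) * (A * P powr l1 + c * P - E * b)
        = (1 - l1) * A * P powr l1 + (1 - l1) * c * P - (1 - l1) * E * b"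
      by (simp add: algebra_simps)
    also have "\<dots> = (1 - l1) * D"
      unfolding cP AP by (simp add: D_def a_def b_def algebra_simps)
    finally have payoff_P: "A * P powr l1 + c * P - E * b = D" using l1 by simp
    have fit_P: "B1 * P powr l1 + B2 * P powr l2 > D" if "P \<noteq> p1"
      using two_power_stationary_min[OF l1 l2 p12(1) D _ slope1 P that] level1
      by (simp add: D_def E_def)
    have level2': "B1 * p2 powr l1 + B2 * p2 powr l2 = A * p2 powr l1 + c * p2 - E * b"
      using level2 by (simp add: A_def c_def E_def b_def)
    show False
    proof (cases "P = p2")
      case True
      then show False using fit_P payoff_P level2' p12 by auto
    next
      case False
      have "P \<le> q" using exit_below rb by (simp add: q_def P_def)
      then have "B1 * P powr l1 + B2 * P powr l2 < D"
        using pasted_below_payoff[OF l1 l2 c cq p2 level2' _ P _ False] slope2 payoff_P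
        by (simp add: A_def c_def)
      moreover have "B1 * P powr l1 + B2 * P powr l2 \<ge> D"
        using fit_P level1 by (cases "P = p1") (auto simp: D_def E_def)
      ultimately show False by simp
    qed
  qed
  then show ?thesis using exit_bound rb by simp
qed

theorem corollary5p6:
  fixes mu sigma r C KI KO delta l1 l2 :: real
  assumes sigma: "sigma > 0" and rpos: "r > 0" and delta: "delta \<ge> 0"
    and roots: "r - mu * l1 - sigma^2 / 2 * l1 * (l1 - 1) = 0"
               "r - mu * l2 - sigma^2 / 2 * l2 * (l2 - 1) = 0"
    and l12: "l1 < l2"
    and rmu: "r > mu"
  shows
   "(C - r * KO \<le> 0 \<and> C + r * KI > 0 \<longrightarrow>
       exp (- mu * delta) * (l2 / (l2 - 1)) * (r - mu) * (C / r + KI)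
         > exp (- mu * delta) * (C + r * KI))
  \<and> (\<forall>pI. C - r * KO > 0 \<and> C + r * KI > 0 \<and> KI + KO \<ge> 0
       \<and> pI > 0
       \<and> Acoef mu r C KO delta l1 * (l2 - l1) * pI powr l1
           + exp ((mu - r) * delta) / (r - mu) * (l2 - 1) * pI
           - l2 * exp (- r * delta) * (C / r + KI) = 0
       \<and> (\<forall>p. p > 0 \<and> Acoef mu r C KO delta l1 * (l2 - l1) * p powr l1
           + exp ((mu - r) * delta) / (r - mu) * (l2 - 1) * p
           - l2 * exp (- r * delta) * (C / r + KI) = 0 \<longrightarrow> p \<le> pI)
       \<longrightarrow> pI > exp (- mu * delta) * (C + r * KI))
  \<and> (\<forall>p1 p2 B1 B2. C - r * KO > 0 \<and> C + r * KI > 0 \<and> KI + KO < 0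
       \<and> pO mu r C KO delta l1 < exp (- mu * delta) * (C + r * KI)
       \<and> 0 < p1 \<and> p1 < p2 \<and> p1 \<le> pO mu r C KO delta l1
       \<and> B1 * p1 powr l1 + B2 * p1 powr l2 = - exp (- r * delta) * (KI + KO)
       \<and> l1 * B1 * p1 powr (l1 - 1) + l2 * B2 * p1 powr (l2 - 1) = 0
       \<and> B1 * p2 powr l1 + B2 * p2 powr l2
           = Acoef mu r C KO delta l1 * p2 powr l1
             + exp ((mu - r) * delta) / (r - mu) * p2 - exp (- r * delta) * (C / r + KI)
       \<and> l1 * B1 * p2 powr (l1 - 1) + l2 * B2 * p2 powr (l2 - 1)
           = l1 * Acoef mu r C KO delta l1 * p2 powr (l1 - 1)
             + exp ((mu - r) * delta) / (r - mu)
       \<longrightarrow> p1 < exp (- mu * delta) * (C - r * KO)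
         \<and> p2 > exp (- mu * delta) * (C + r * KI))"
proof -
  have l1: "l1 < 0" and l2: "l2 > 1" and key: "r * ((1 - l1) * (l2 - 1)) = - l1 * l2 * (r - mu)"
    using characteristic_roots[OF sigma rpos rmu roots l12] by simp_all
  show ?thesis
    using entry_beyond_breakeven_without_exit[OF l1 l2 key rmu rpos]
      largest_entry_root_beyond_breakeven[OF l1 l2 key rmu rpos]
      entry_thresholds_straddle_breakeven[OF l1 l2 key rmu rpos]
    by blast
qed

end
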